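(* Let $F,G$ be complete Heyting sheaves (frame sheaves) on a locale $X$ and $\alpha:F\to G$ an order-preserving morphism. Then $\alpha$ is a frame morphism if and only if for each $u\in\mathcal{O}(X)$, $\alpha_u:F(u)\to G(u)$ is a frame homomorphism and for all $v\le u$ in $\mathcal{O}(X)$, $\alpha_u\circ f_{v,u}=g_{v,u}\circ\alpha_v$, where $f_{v,u}:F(v)\to F(u)$ and $g_{v,u}:G(v)\to G(u)$ are the left adjoints of the restriction maps $F(u)\to F(v)$ and $G(u)\to G(v)$.
   Context: Let $X$ be a locale with frame of opens $\mathcal{O}(X)$. A posheaf on $X$ is a sheaf of sets $F$ with (POS1) each $F(u)$ a poset; (POS2) restriction maps $F(u)\to F(v)$, $x\mapsto x|_v$ ($v\le u$), order-preserving; (POS3) if $u=\bigvee_i u_i$ and $s,t\in F(u)$ satisfy $s|_{u_i}\le t|_{u_i}$ for all $i$, then $s\le t$. A frame sheaf (complete Heyting sheaf) is a posheaf $F$ such that each $F(u)$ is a frame, each restriction map $F(u)\to F(v)$ ($v\le u$) is surjective and has a left adjoint $l_{v,u}$ and a right adjoint, and $x\wedge l_{v,u}(y)=l_{v,u}(x|_v\wedge y)$ for $x\in F(u)$, $y\in F(v)$. A morphism $\alpha$ of posheaves is order-preserving if each $\alpha_u$ is monotone. For complete posheaves, $sup_F:\mathbb{P}F\to F$ sends a subsheaf $S$ of $F^u$ (the restriction of $F$ to $\downarrow u$) to the least $z\in F(u)$ with $S(v)\subseteq\{y\mid y\le z|_v\}$ for all $v\le u$; $\alpha_*$ sends $S$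 to the subsheaf of $G^u$ generated by $v\mapsto\alpha_v(S(v))$; $\alpha$ is sup-preserving if $sup_G\circ\alpha_*=\alpha\circ sup_F$. $\alpha$ preserves finite meets if $m_G\circ(\alpha\times\alpha)=\alpha\circ m_F$, where $m_F$ is componentwise binary meet. A frame morphism is a sup-preserving morphism that preserves finite meets. *)

theory Defs
  imports Main
begin

section \<open>Locales: the frame of opens is a type of class complete_lattice satisfying the frame law\<close>

definition frame_type :: "'o::complete_lattice itself \<Rightarrow> bool" where
  "frame_type _ \<longleftrightarrow> (\<forall>(x::'o) A. inf x (Sup A) = Sup (inf x ` A))"

definition partial_order_on_set :: "'a set \<Rightarrow> ('a \<Rightarrow> 'a \<Rightarrow> bool) \<Rightarrow> bool" where
  "partial_order_on_set A le \<longleftrightarrow>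
     (\<forall>x\<in>A. le x x) \<and>
     (\<forall>x\<in>A. \<forall>y\<in>A. le x y \<and> le y x \<longrightarrow> x = y) \<and>
     (\<forall>x\<in>A. \<forall>y\<in>A. \<forall>z\<in>A. le x y \<and> le y z \<longrightarrow> le x z)"

definition is_lub :: "'a set \<Rightarrow> ('a \<Rightarrow> 'a \<Rightarrow> bool) \<Rightarrow> 'a set \<Rightarrow> 'a \<Rightarrow> bool" where
  "is_lub A le B z \<longleftrightarrow> z \<in> A \<and> (\<forall>b\<in>B. le b z) \<and> (\<forall>z'\<in>A. (\<forall>b\<in>B. le b z') \<longrightarrow> le z z')"

definition is_glb :: "'a set \<Rightarrow> ('a \<Rightarrow> 'a \<Rightarrow> bool) \<Rightarrow> 'a set \<Rightarrow> 'a \<Rightarrow> bool" where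
  "is_glb A le B z \<longleftrightarrow> z \<in> A \<and> (\<forall>b\<in>B. le z b) \<and> (\<forall>z'\<in>A. (\<forall>b\<in>B. le z' b) \<longrightarrow> le z' z)"

definition lub_on :: "'a set \<Rightarrow> ('a \<Rightarrow> 'a \<Rightarrow> bool) \<Rightarrow> 'a set \<Rightarrow> 'a" where
  "lub_on A le B = (THE z. is_lub A le B z)"

definition meet_on :: "'a set \<Rightarrow> ('a \<Rightarrow> 'a \<Rightarrow> bool) \<Rightarrow> 'a \<Rightarrow> 'a \<Rightarrow> 'a" where
  "meet_on A le x y = (THE z. is_glb A le {x, y} z)"

definition top_on :: "'a set \<Rightarrow> ('a \<Rightarrow> 'a \<Rightarrow> bool) \<Rightarrow> 'a" where
  "top_on A le = lub_on A le A"

definition frame_on :: "'a set \<Rightarrow> ('a \<Rightarrow> 'a \<Rightarrow> bool) \<Rightarrow> bool" where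
  "frame_on A le \<longleftrightarrow> partial_order_on_set A le \<and>
     (\<forall>B\<subseteq>A. \<exists>z. is_lub A le B z) \<and>
     (\<forall>x\<in>A. \<forall>B\<subseteq>A. meet_on A le x (lub_on A le B) = lub_on A le ((\<lambda>b. meet_on A le x b) ` B))"

definition frame_hom :: "'a set \<Rightarrow> ('a \<Rightarrow> 'a \<Rightarrow> bool) \<Rightarrow> 'b set \<Rightarrow> ('b \<Rightarrow> 'b \<Rightarrow> bool) \<Rightarrow> ('a \<Rightarrow> 'b) \<Rightarrow> bool" where
  "frame_hom A leA B leB f \<longleftrightarrow>
     (\<forall>x\<in>A. f x \<in> B) \<and>
     (\<forall>C\<subseteq>A. f (lub_on A leA C) = lub_on B leB (f ` C)) \<and>
     (\<forall>x\<in>A. \<forall>y\<in>A. f (meet_on A leA x y) = meet_on B leB (f x) (f y)) \<and>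
     f (top_on A leA) = top_on B leB"

text \<open>sec F u = F(u); res F u v x = x|_v for v \<le> u; le F u = order of F(u).\<close>
record ('o, 'a) posheaf =
  sec :: "'o \<Rightarrow> 'a set"
  res :: "'o \<Rightarrow> 'o \<Rightarrow> 'a \<Rightarrow> 'a"
  le  :: "'o \<Rightarrow> 'a \<Rightarrow> 'a \<Rightarrow> bool"

definition sheaf :: "('o::complete_lattice, 'a) posheaf \<Rightarrow> bool" where
  "sheaf F \<longleftrightarrow>
     (\<forall>u. \<forall>x\<in>sec F u. res F u u x = x) \<and>
     (\<forall>u v. v \<le> u \<longrightarrow> (\<forall>x\<in>sec F u. res F u v x \<in> sec F v)) \<and>
     (\<forall>u v w. w \<le> v \<longrightarrow> v \<le> u \<longrightarrow> (\<forall>x\<in>sec F u. res F v w (res F u v x) = res F u w x)) \<and>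
     (\<forall>u U s. Sup U = u \<longrightarrow> (\<forall>w\<in>U. s w \<in> sec F w) \<longrightarrow>
        (\<forall>w\<in>U. \<forall>w'\<in>U. res F w (inf w w') (s w) = res F w' (inf w w') (s w')) \<longrightarrow>
        (\<exists>!x. x \<in> sec F u \<and> (\<forall>w\<in>U. res F u w x = s w)))"

definition is_posheaf :: "('o::complete_lattice, 'a) posheaf \<Rightarrow> bool" where
  "is_posheaf F \<longleftrightarrow> sheaf F \<and>
     (\<forall>u. partial_order_on_set (sec F u) (le F u)) \<and>
     (\<forall>u v. v \<le> u \<longrightarrow> (\<forall>x\<in>sec F u. \<forall>y\<in>sec F u. le F u x y \<longrightarrow> le F v (res F u v x) (res F u v y))) \<and>
     (\<forall>u U. Sup U = u \<longrightarrow> (\<forall>s\<in>sec F u. \<forall>t\<in>sec F u.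
        (\<forall>w\<in>U. le F w (res F u w s) (res F u w t)) \<longrightarrow> le F u s t))"

definition ladj :: "('o::complete_lattice, 'a) posheaf \<Rightarrow> 'o \<Rightarrow> 'o \<Rightarrow> 'a \<Rightarrow> 'a" where
  "ladj F u v y = (THE x. x \<in> sec F u \<and> (\<forall>x'\<in>sec F u. le F u x x' \<longleftrightarrow> le F v y (res F u v x')))"

definition frame_sheaf :: "('o::complete_lattice, 'a) posheaf \<Rightarrow> bool" where
  "frame_sheaf F \<longleftrightarrow> is_posheaf F \<and>
     (\<forall>u. frame_on (sec F u) (le F u)) \<and>
     (\<forall>u v. v \<le> u \<longrightarrow> res F u v ` sec F u = sec F v) \<and>
     (\<forall>u v. v \<le> u \<longrightarrow> (\<exists>l. \<forall>y\<in>sec F v. l y \<in> sec F u \<and>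
          (\<forall>x\<in>sec F u. le F u (l y) x \<longleftrightarrow> le F v y (res F u v x)))) \<and>
     (\<forall>u v. v \<le> u \<longrightarrow> (\<exists>r. \<forall>y\<in>sec F v. r y \<in> sec F u \<and>
          (\<forall>x\<in>sec F u. le F v (res F u v x) y \<longleftrightarrow> le F u x (r y)))) \<and>
     (\<forall>u v. v \<le> u \<longrightarrow> (\<forall>x\<in>sec F u. \<forall>y\<in>sec F v.
          meet_on (sec F u) (le F u) x (ladj F u v y) =
          ladj F u v (meet_on (sec F v) (le F v) (res F u v x) y)))"

definition sheaf_morphism :: "('o::complete_lattice, 'a) posheaf \<Rightarrow> ('o, 'b) posheaf \<Rightarrow> ('o \<Rightarrow> 'a \<Rightarrow> 'b) \<Rightarrow> bool" where
  "sheaf_morphism F G \<alpha> \<longleftrightarrow>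
     (\<forall>u. \<forall>x\<in>sec F u. \<alpha> u x \<in> sec G u) \<and>
     (\<forall>u v. v \<le> u \<longrightarrow> (\<forall>x\<in>sec F u. \<alpha> v (res F u v x) = res G u v (\<alpha> u x)))"

definition order_preserving :: "('o::complete_lattice, 'a) posheaf \<Rightarrow> ('o, 'b) posheaf \<Rightarrow> ('o \<Rightarrow> 'a \<Rightarrow> 'b) \<Rightarrow> bool" where
  "order_preserving F G \<alpha> \<longleftrightarrow>
     (\<forall>u. \<forall>x\<in>sec F u. \<forall>y\<in>sec F u. le F u x y \<longrightarrow> le G u (\<alpha> u x) (\<alpha> u y))"

text \<open>Subsheaves of F^u (the elements of (\<bbbP>F)(u)); S v is empty for v not below u.\<close>
definition subsheaf :: "('o::complete_lattice, 'a) posheaf \<Rightarrow> 'o \<Rightarrow> ('o \<Rightarrow> 'a set) \<Rightarrow> bool" where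
  "subsheaf F u S \<longleftrightarrow>
     (\<forall>v. \<not> v \<le> u \<longrightarrow> S v = {}) \<and>
     (\<forall>v. v \<le> u \<longrightarrow> S v \<subseteq> sec F v) \<and>
     (\<forall>v w. w \<le> v \<longrightarrow> v \<le> u \<longrightarrow> (\<forall>x\<in>S v. res F v w x \<in> S w)) \<and>
     (\<forall>v U s. v \<le> u \<longrightarrow> Sup U = v \<longrightarrow> (\<forall>w\<in>U. s w \<in> S w) \<longrightarrow>
        (\<forall>w\<in>U. \<forall>w'\<in>U. res F w (inf w w') (s w) = res F w' (inf w w') (s w')) \<longrightarrow>
        (\<exists>x\<in>S v. \<forall>w\<in>U. res F v w x = s w))"

definition sup_sh :: "('o::complete_lattice, 'a) posheaf \<Rightarrow> 'o \<Rightarrow> ('o \<Rightarrow> 'a set) \<Rightarrow> 'a" where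
  "sup_sh F u S = (THE z. z \<in> sec F u \<and>
      (\<forall>v. v \<le> u \<longrightarrow> (\<forall>y\<in>S v. le F v y (res F u v z))) \<and>
      (\<forall>z'\<in>sec F u. (\<forall>v. v \<le> u \<longrightarrow> (\<forall>y\<in>S v. le F v y (res F u v z'))) \<longrightarrow> le F u z z'))"

text \<open>\<alpha>_* : the subsheaf of G^u generated by v \<mapsto> \<alpha>_v(S(v)).\<close>
definition push :: "('o \<Rightarrow> 'a \<Rightarrow> 'b) \<Rightarrow> ('o::complete_lattice, 'b) posheaf \<Rightarrow> 'o \<Rightarrow> ('o \<Rightarrow> 'a set) \<Rightarrow> ('o \<Rightarrow> 'b set)" where
  "push \<alpha> G u S = (\<lambda>v. {y. \<forall>S'. subsheaf G u S' \<and> (\<forall>w. w \<le> u \<longrightarrow> \<alpha> w ` S w \<subseteq> S' w) \<longrightarrow> y \<in> S' v})"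

definition sup_preserving :: "('o::complete_lattice, 'a) posheaf \<Rightarrow> ('o, 'b) posheaf \<Rightarrow> ('o \<Rightarrow> 'a \<Rightarrow> 'b) \<Rightarrow> bool" where
  "sup_preserving F G \<alpha> \<longleftrightarrow>
     (\<forall>u S. subsheaf F u S \<longrightarrow> sup_sh G u (push \<alpha> G u S) = \<alpha> u (sup_sh F u S))"

definition preserves_finite_meets :: "('o::complete_lattice, 'a) posheaf \<Rightarrow> ('o, 'b) posheaf \<Rightarrow> ('o \<Rightarrow> 'a \<Rightarrow> 'b) \<Rightarrow> bool" where
  "preserves_finite_meets F G \<alpha> \<longleftrightarrow>
     (\<forall>u. \<forall>x\<in>sec F u. \<forall>y\<in>sec F u.
        \<alpha> u (meet_on (sec F u) (le F u) x y) = meet_on (sec G u) (le G u) (\<alpha> u x) (\<alpha> u y)) \<and>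
     (\<forall>u. \<alpha> u (top_on (sec F u) (le F u)) = top_on (sec G u) (le G u))"

definition frame_morphism :: "('o::complete_lattice, 'a) posheaf \<Rightarrow> ('o, 'b) posheaf \<Rightarrow> ('o \<Rightarrow> 'a \<Rightarrow> 'b) \<Rightarrow> bool" where
  "frame_morphism F G \<alpha> \<longleftrightarrow> sup_preserving F G \<alpha> \<and> preserves_finite_meets F G \<alpha>"

end

theory Submission
  imports Defs
begin

text \<open>
  In a frame sheaf the adjunction \<open>l\<^sub>v\<^sub>,\<^sub>u y \<le> z \<longleftrightarrow> y \<le> z|\<^sub>v\<close> shows that \<open>sup\<^sub>F S\<close> is the join in
  \<open>F(u)\<close> of all \<open>l\<^sub>v\<^sub>,\<^sub>u y\<close> with \<open>y \<in> S(v)\<close>, and this holds for an arbitrary family \<open>S\<close>, not only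
  for subsheaves. Moreover the subsheaf generated by a family has the same upper bounds as the
  family, because the sections lying below a fixed \<open>z\<close> form a subsheaf. So \<open>\<alpha>\<close> preserves
  \<open>sup\<close> iff it preserves these joins of adjoint images. Families concentrated at one stage then
  give both conditions: a set \<open>C \<subseteq> F(u)\<close> at stage \<open>u\<close> gives preservation of its join, a single
  \<open>y \<in> F(v)\<close> at stage \<open>v\<close> gives \<open>\<alpha>\<^sub>u (l\<^sub>v\<^sub>,\<^sub>u y) = l\<^sub>v\<^sub>,\<^sub>u (\<alpha>\<^sub>v y)\<close>. Conversely these two conditions
  carry the join formula for \<open>sup\<^sub>F S\<close> over to \<open>sup\<^sub>G (\<alpha>\<^sub>* S)\<close>.
\<close>

lemma lub_on_eqI:
  assumes po: "partial_order_on_set A r" and z: "is_lub A r B z"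
  shows "lub_on A r B = z"
  unfolding lub_on_def
proof (rule the_equality)
  fix x assume "is_lub A r B x"
  with z have "r x z" "r z x" "x \<in> A" "z \<in> A" unfolding is_lub_def by blast+
  with po show "x = z" unfolding partial_order_on_set_def by blast
qed fact

lemma lub_on_singleton:
  assumes po: "partial_order_on_set A r" and "a \<in> A"
  shows "lub_on A r {a} = a"
proof (rule lub_on_eqI[OF po])
  show "is_lub A r {a} a"
    using assms unfolding is_lub_def partial_order_on_set_def by blast
qed

lemma sheaf_res_id:
  assumes "sheaf F" and "x \<in> sec F u"
  shows "res F u u x = x"
  using assms(1)[unfolded sheaf_def, THEN conjunct1] assms(2) by blast

lemma sheaf_res_sec:
  assumes "sheaf F" and "v \<le> u" and "x \<in> sec F u"
  shows "res F u v x \<in> sec F v"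
  using assms(1)[unfolded sheaf_def, THEN conjunct2, THEN conjunct1] assms(2,3) by blast

lemma sheaf_res_res:
  assumes "sheaf F" and "w \<le> v" and "v \<le> u" and "x \<in> sec F u"
  shows "res F v w (res F u v x) = res F u w x"
  using assms(1)[unfolded sheaf_def, THEN conjunct2, THEN conjunct2, THEN conjunct1] assms(2-4)
  by blast

lemma sheaf_glue:
  assumes "sheaf F" and "Sup U = v" and "\<forall>w\<in>U. s w \<in> sec F w"
    and "\<forall>w\<in>U. \<forall>w'\<in>U. res F w (inf w w') (s w) = res F w' (inf w w') (s w')"
  shows "\<exists>!x. x \<in> sec F v \<and> (\<forall>w\<in>U. res F v w x = s w)"
  by (rule assms(1)[unfolded sheaf_def, THEN conjunct2, THEN conjunct2, THEN conjunct2,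
        THEN spec, THEN spec, THEN spec, THEN mp, THEN mp, THEN mp, OF assms(2-4)])

lemma posheaf_sheaf: "is_posheaf F \<Longrightarrow> sheaf F"
  unfolding is_posheaf_def by (rule conjunct1)

lemma posheaf_partial_order:
  assumes "is_posheaf F"
  shows "partial_order_on_set (sec F u) (le F u)"
  using assms[unfolded is_posheaf_def, THEN conjunct2, THEN conjunct1] by blast

lemma posheaf_res_mono:
  assumes "is_posheaf F" and "v \<le> u" and "x \<in> sec F u" and "y \<in> sec F u" and "le F u x y"
  shows "le F v (res F u v x) (res F u v y)"
  using assms(1)[unfolded is_posheaf_def, THEN conjunct2, THEN conjunct2, THEN conjunct1] assms(2-5)
  by blast

lemma posheaf_le_local:
  assumes "is_posheaf F" and "Sup U = u" and "x \<in> sec F u" and "y \<in> sec F u"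
    and "\<forall>w\<in>U. le F w (res F u w x) (res F u w y)"
  shows "le F u x y"
  using assms(1)[unfolded is_posheaf_def, THEN conjunct2, THEN conjunct2, THEN conjunct2] assms(2-5)
  by blast

lemma frame_sheaf_posheaf: "frame_sheaf F \<Longrightarrow> is_posheaf F"
  unfolding frame_sheaf_def by (rule conjunct1)

lemma sheaf_morphism_id: "sheaf F \<Longrightarrow> sheaf_morphism F F (\<lambda>u x. x)"
  unfolding sheaf_morphism_def by (simp add: sheaf_res_sec)

lemma sheaf_morphism_sec: "sheaf_morphism F G \<alpha> \<Longrightarrow> x \<in> sec F u \<Longrightarrow> \<alpha> u x \<in> sec G u"
  unfolding sheaf_morphism_def by blast

lemma sheaf_morphism_res:
  "sheaf_morphism F G \<alpha> \<Longrightarrow> v \<le> u \<Longrightarrow> x \<in> sec F u \<Longrightarrow> \<alpha> v (res F u v x) = res G u v (\<alpha> u x)"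
  unfolding sheaf_morphism_def by blast

lemma subsheaf_sec:
  assumes "subsheaf F u S" and "v \<le> u"
  shows "S v \<subseteq> sec F v"
  using assms(1)[unfolded subsheaf_def, THEN conjunct2, THEN conjunct1] assms(2) by blast

lemma push_generators: "v \<le> u \<Longrightarrow> \<beta> v ` T v \<subseteq> push \<beta> G u T v"
  unfolding push_def by blast

lemma push_least:
  "subsheaf G u S \<Longrightarrow> \<forall>w. w \<le> u \<longrightarrow> \<beta> w ` T w \<subseteq> S w \<Longrightarrow> push \<beta> G u T v \<subseteq> S v"
  unfolding push_def by blast

lemma subsheaf_full:
  assumes "sheaf F"
  shows "subsheaf F u (\<lambda>w. if w \<le> u then sec F w else {})"
  unfolding subsheaf_def
proof (intro conjI allI impI ballI)
  fix v U s
  assume "v \<le> u" "Sup U = v" "\<forall>w\<in>U. s w \<in> (if w \<le> u then sec F w else {})"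
    "\<forall>w\<in>U. \<forall>w'\<in>U. res F w (inf w w') (s w) = res F w' (inf w w') (s w')"
  then have "\<forall>w\<in>U. s w \<in> sec F w" by (auto split: if_splits)
  with sheaf_glue[OF assms \<open>Sup U = v\<close> _ \<open>\<forall>w\<in>U. \<forall>w'\<in>U. _\<close>] obtain x
    where "x \<in> sec F v" "\<forall>w\<in>U. res F v w x = s w" by blast
  with \<open>v \<le> u\<close> show "\<exists>x\<in>(if v \<le> u then sec F v else {}). \<forall>w\<in>U. res F v w x = s w" by auto
qed (auto intro: sheaf_res_sec[OF assms] order_trans)

lemma subsheaf_res:
  assumes "subsheaf F u S" and "w \<le> v" and "v \<le> u" and "x \<in> S v"
  shows "res F v w x \<in> S w"
  using assms(1)[unfolded subsheaf_def, THEN conjunct2, THEN conjunct2, THEN conjunct1] assms(2-4)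
  by blast

lemma subsheaf_glue:
  assumes "subsheaf F u S" and "v \<le> u" and "Sup U = v" and "\<forall>w\<in>U. s w \<in> S w"
    and "\<forall>w\<in>U. \<forall>w'\<in>U. res F w (inf w w') (s w) = res F w' (inf w w') (s w')"
  shows "\<exists>x\<in>S v. \<forall>w\<in>U. res F v w x = s w"
  by (rule assms(1)[unfolded subsheaf_def, THEN conjunct2, THEN conjunct2, THEN conjunct2,
        THEN spec, THEN spec, THEN spec, THEN mp, THEN mp, THEN mp, THEN mp, OF assms(2-5)])

lemma subsheaf_push:
  assumes F: "sheaf F" and T: "\<forall>w. w \<le> u \<longrightarrow> \<beta> w ` T w \<subseteq> sec F w"
  shows "subsheaf F u (push \<beta> F u T)"
proof -
  have "\<forall>w. w \<le> u \<longrightarrow> \<beta> w ` T w \<subseteq> (if w \<le> u then sec F w else {})" using T by simp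
  then have in_full: "push \<beta> F u T v \<subseteq> (if v \<le> u then sec F v else {})" for v
    by (rule push_least[OF subsheaf_full[OF F]])
  show ?thesis
    unfolding subsheaf_def
  proof (intro conjI allI impI ballI)
    fix v assume "\<not> v \<le> u"
    with in_full[of v] show "push \<beta> F u T v = {}" by simp
  next
    fix v assume "v \<le> u"
    with in_full[of v] show "push \<beta> F u T v \<subseteq> sec F v" by simp
  next
    fix v w x assume wv: "w \<le> v" and vu: "v \<le> u" and x: "x \<in> push \<beta> F u T v"
    show "res F v w x \<in> push \<beta> F u T w"
      unfolding push_def
    proof (intro CollectI allI impI)
      fix S' assume "subsheaf F u S' \<and> (\<forall>w. w \<le> u \<longrightarrow> \<beta> w ` T w \<subseteq> S' w)"
      then have S': "subsheaf F u S'" and gen: "\<forall>w. w \<le> u \<longrightarrow> \<beta> w ` T w \<subseteq> S' w" by blast+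
      from x push_least[OF S' gen] have "x \<in> S' v" by blast
      then show "res F v w x \<in> S' w" by (rule subsheaf_res[OF S' wv vu])
    qed
  next
    fix v U s
    assume vu: "v \<le> u" and U: "Sup U = v" and s: "\<forall>w\<in>U. s w \<in> push \<beta> F u T w"
      and c: "\<forall>w\<in>U. \<forall>w'\<in>U. res F w (inf w w') (s w) = res F w' (inf w w') (s w')"
    have "\<forall>w\<in>U. s w \<in> sec F w"
    proof
      fix w assume w: "w \<in> U"
      then have "w \<le> u" using U vu by (auto intro: Sup_upper order_trans)
      with s w in_full[of w] show "s w \<in> sec F w" by auto
    qed
    from sheaf_glue[OF F U this c] obtain x where x: "x \<in> sec F v \<and> (\<forall>w\<in>U. res F v w x = s w)"
      and unique: "\<forall>x'. x' \<in> sec F v \<and> (\<forall>w\<in>U. res F v w x' = s w) \<longrightarrow> x' = x"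
      by (elim ex1E) blast
    \<comment> \<open>by uniqueness of gluing, \<open>x\<close> lies in every subsheaf containing the generators\<close>
    have "x \<in> S' v" if S': "subsheaf F u S'" "\<forall>w. w \<le> u \<longrightarrow> \<beta> w ` T w \<subseteq> S' w" for S'
    proof -
      have "\<forall>w\<in>U. s w \<in> S' w" using s S' unfolding push_def by blast
      from subsheaf_glue[OF S'(1) vu U this c] obtain x' where "x' \<in> S' v" "\<forall>w\<in>U. res F v w x' = s w"
        by blast
      with subsheaf_sec[OF S'(1) vu] unique show ?thesis by blast
    qed
    then have "x \<in> push \<beta> F u T v" unfolding push_def by blast
    with x show "\<exists>x\<in>push \<beta> F u T v. \<forall>w\<in>U. res F v w x = s w" by blast
  qed
qed

lemma subsheaf_below:
  assumes F: "sheaf F" and G: "is_posheaf G" and \<alpha>: "sheaf_morphism F G \<alpha>" and z: "z \<in> sec G u"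
  shows "subsheaf F u (\<lambda>w. if w \<le> u then {y \<in> sec F w. le G w (\<alpha> w y) (res G u w z)} else {})"
  unfolding subsheaf_def
proof (intro conjI allI impI ballI)
  fix v w x assume wv: "w \<le> v" and vu: "v \<le> u"
    and "x \<in> (if v \<le> u then {y \<in> sec F v. le G v (\<alpha> v y) (res G u v z)} else {})"
  then have x: "x \<in> sec F v" "le G v (\<alpha> v x) (res G u v z)" by auto
  have "le G w (res G v w (\<alpha> v x)) (res G v w (res G u v z))"
    using posheaf_res_mono[OF G wv sheaf_morphism_sec[OF \<alpha> x(1)] sheaf_res_sec[OF posheaf_sheaf[OF G] vu z] x(2)] .
  then show "res F v w x \<in> (if w \<le> u then {y \<in> sec F w. le G w (\<alpha> w y) (res G u w z)} else {})"
    using wv vu x(1) sheaf_res_res[OF posheaf_sheaf[OF G] wv vu z] sheaf_morphism_res[OF \<alpha> wv x(1)]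
      sheaf_res_sec[OF F wv x(1)] by auto
next
  fix v U s assume vu: "v \<le> u" and U: "Sup U = v"
    and s: "\<forall>w\<in>U. s w \<in> (if w \<le> u then {y \<in> sec F w. le G w (\<alpha> w y) (res G u w z)} else {})"
    and c: "\<forall>w\<in>U. \<forall>w'\<in>U. res F w (inf w w') (s w) = res F w' (inf w w') (s w')"
  have wv: "w \<le> v" if "w \<in> U" for w using U that by (auto intro: Sup_upper)
  have "\<forall>w\<in>U. s w \<in> sec F w" using s by (auto split: if_splits)
  from sheaf_glue[OF F U this c] obtain x where x: "x \<in> sec F v" "\<forall>w\<in>U. res F v w x = s w"
    by blast
  have "le G v (\<alpha> v x) (res G u v z)"
  proof (rule posheaf_le_local[OF G U sheaf_morphism_sec[OF \<alpha> x(1)]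
        sheaf_res_sec[OF posheaf_sheaf[OF G] vu z]], intro ballI)
    fix w assume w: "w \<in> U"
    then have "w \<le> u" using wv vu by (meson order_trans)
    with s w have "le G w (\<alpha> w (s w)) (res G u w z)" by auto
    with w x show "le G w (res G v w (\<alpha> v x)) (res G v w (res G u v z))"
      by (simp add: sheaf_res_res[OF posheaf_sheaf[OF G] wv[OF w] vu z]
          sheaf_morphism_res[OF \<alpha> wv[OF w] x(1), symmetric])
  qed
  with x vu show "\<exists>x\<in>(if v \<le> u then {y \<in> sec F v. le G v (\<alpha> v y) (res G u v z)} else {}).
      \<forall>w\<in>U. res F v w x = s w" by auto
qed auto

definition sh_upper_bound :: "('o::complete_lattice, 'a) posheaf \<Rightarrow> 'o \<Rightarrow> ('o \<Rightarrow> 'a set) \<Rightarrow> 'a \<Rightarrow> bool" where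
  "sh_upper_bound F u T z \<longleftrightarrow> (\<forall>v. v \<le> u \<longrightarrow> (\<forall>y\<in>T v. le F v y (res F u v z)))"

lemma sh_upper_boundD: "sh_upper_bound F u T z \<Longrightarrow> v \<le> u \<Longrightarrow> y \<in> T v \<Longrightarrow> le F v y (res F u v z)"
  unfolding sh_upper_bound_def by blast

lemma sup_sh_eq_least_upper_bound:
  "sup_sh F u T = (THE z. z \<in> sec F u \<and> sh_upper_bound F u T z \<and>
     (\<forall>z'\<in>sec F u. sh_upper_bound F u T z' \<longrightarrow> le F u z z'))"
  unfolding sup_sh_def sh_upper_bound_def ..

lemma sup_sh_cong:
  assumes "\<And>z. z \<in> sec F u \<Longrightarrow> sh_upper_bound F u T z \<longleftrightarrow> sh_upper_bound F u T' z"
  shows "sup_sh F u T = sup_sh F u T'"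
  unfolding sup_sh_eq_least_upper_bound using assms by (auto intro!: arg_cong[where f = The])

lemma sup_sh_eqI:
  assumes "partial_order_on_set (sec F u) (le F u)"
    and "z \<in> sec F u" "sh_upper_bound F u T z"
    and "\<forall>z'\<in>sec F u. sh_upper_bound F u T z' \<longrightarrow> le F u z z'"
  shows "sup_sh F u T = z"
  unfolding sup_sh_eq_least_upper_bound
proof (rule the_equality)
  fix x assume "x \<in> sec F u \<and> sh_upper_bound F u T x \<and>
    (\<forall>z'\<in>sec F u. sh_upper_bound F u T z' \<longrightarrow> le F u x z')"
  with assms have "le F u x z" "le F u z x" "x \<in> sec F u" by blast+
  with assms(1,2) show "x = z" unfolding partial_order_on_set_def by blast
qed (use assms in blast)

lemma sh_upper_bound_push:
  assumes F: "sheaf F" and G: "is_posheaf G" and \<alpha>: "sheaf_morphism F G \<alpha>"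
    and T: "\<forall>w. w \<le> u \<longrightarrow> \<beta> w ` T w \<subseteq> sec F w" and z: "z \<in> sec G u"
  shows "sh_upper_bound G u (\<lambda>v. \<alpha> v ` push \<beta> F u T v) z \<longleftrightarrow>
    sh_upper_bound G u (\<lambda>v. \<alpha> v ` \<beta> v ` T v) z"
proof
  assume ub: "sh_upper_bound G u (\<lambda>v. \<alpha> v ` push \<beta> F u T v) z"
  show "sh_upper_bound G u (\<lambda>v. \<alpha> v ` \<beta> v ` T v) z"
    unfolding sh_upper_bound_def
  proof (intro allI impI ballI)
    fix v y assume vu: "v \<le> u" and y: "y \<in> \<alpha> v ` \<beta> v ` T v"
    from y have "y \<in> \<alpha> v ` push \<beta> F u T v" by (rule subsetD[OF image_mono[OF push_generators[OF vu]]])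
    with ub vu show "le G v y (res G u v z)" by (rule sh_upper_boundD)
  qed
next
  assume ub: "sh_upper_bound G u (\<lambda>v. \<alpha> v ` \<beta> v ` T v) z"
  let ?below = "\<lambda>w. if w \<le> u then {y \<in> sec F w. le G w (\<alpha> w y) (res G u w z)} else {}"
  have "\<forall>w. w \<le> u \<longrightarrow> \<beta> w ` T w \<subseteq> ?below w"
    using ub T unfolding sh_upper_bound_def by (auto simp: image_subset_iff)
  with push_least[OF subsheaf_below[OF F G \<alpha> z]] have below: "push \<beta> F u T v \<subseteq> ?below v" for v .
  show "sh_upper_bound G u (\<lambda>v. \<alpha> v ` push \<beta> F u T v) z"
    unfolding sh_upper_bound_def
  proof (intro allI impI ballI)
    fix v y assume vu: "v \<le> u" and y: "y \<in> \<alpha> v ` push \<beta> F u T v"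
    from y obtain x where "y = \<alpha> v x" and "x \<in> push \<beta> F u T v" by (rule imageE)
    with below[of v] vu show "le G v y (res G u v z)" by auto
  qed
qed

lemma sup_sh_push:
  assumes "sheaf F" and G: "is_posheaf G" and "sheaf_morphism F G \<alpha>"
    and "\<forall>w. w \<le> u \<longrightarrow> \<beta> w ` T w \<subseteq> sec F w"
  shows "sup_sh G u (\<lambda>v. \<alpha> v ` push \<beta> F u T v) = sup_sh G u (\<lambda>v. \<alpha> v ` \<beta> v ` T v)"
  using sh_upper_bound_push[OF assms] by (rule sup_sh_cong)

lemma sup_sh_push_image:
  assumes G: "is_posheaf G" and \<alpha>: "sheaf_morphism F G \<alpha>" and S: "\<forall>w. w \<le> u \<longrightarrow> S w \<subseteq> sec F w"
  shows "sup_sh G u (push \<alpha> G u S) = sup_sh G u (\<lambda>v. \<alpha> v ` S v)"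
proof -
  have "\<forall>w. w \<le> u \<longrightarrow> \<alpha> w ` S w \<subseteq> sec G w" using S sheaf_morphism_sec[OF \<alpha>] by blast
  from sup_sh_push[OF posheaf_sheaf[OF G] G sheaf_morphism_id[OF posheaf_sheaf[OF G]] this]
  show ?thesis by simp
qed

lemma ladj_eqI:
  assumes F: "is_posheaf F" and l: "l \<in> sec F u"
    and adj: "\<forall>x\<in>sec F u. le F u l x \<longleftrightarrow> le F v y (res F u v x)"
  shows "ladj F u v y = l"
  unfolding ladj_def
proof (rule the_equality)
  fix l' assume l': "l' \<in> sec F u \<and> (\<forall>x\<in>sec F u. le F u l' x \<longleftrightarrow> le F v y (res F u v x))"
  note po = posheaf_partial_order[OF F, of u, unfolded partial_order_on_set_def]
  from po l adj have "le F v y (res F u v l)" by blast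
  with l l' have "le F u l' l" by blast
  from po l' adj have "le F v y (res F u v l')" by blast
  with l l' adj have "le F u l l'" by blast
  with \<open>le F u l' l\<close> po l l' show "l' = l" by blast
qed (use l adj in blast)

lemma frame_sheaf_left_adjoint:
  assumes "frame_sheaf F" and "v \<le> u"
  shows "\<exists>l. \<forall>y\<in>sec F v. l y \<in> sec F u \<and> (\<forall>x\<in>sec F u. le F u (l y) x \<longleftrightarrow> le F v y (res F u v x))"
  using assms(1)[unfolded frame_sheaf_def, THEN conjunct2, THEN conjunct2, THEN conjunct2,
      THEN conjunct1, THEN spec, THEN spec, THEN mp, OF assms(2)] .

lemma frame_sheaf_ladj:
  assumes F: "frame_sheaf F" and "v \<le> u" and y: "y \<in> sec F v"
  shows "ladj F u v y \<in> sec F u"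
    and "x \<in> sec F u \<Longrightarrow> le F u (ladj F u v y) x \<longleftrightarrow> le F v y (res F u v x)"
proof -
  obtain l where l: "\<forall>y\<in>sec F v. l y \<in> sec F u \<and> (\<forall>x\<in>sec F u. le F u (l y) x \<longleftrightarrow> le F v y (res F u v x))"
    using frame_sheaf_left_adjoint[OF F \<open>v \<le> u\<close>] by blast
  with y have "ladj F u v y = l y" by (intro ladj_eqI[OF frame_sheaf_posheaf[OF F]]) auto
  with l y show "ladj F u v y \<in> sec F u"
    and "x \<in> sec F u \<Longrightarrow> le F u (ladj F u v y) x \<longleftrightarrow> le F v y (res F u v x)" by auto
qed

lemma ladj_refl:
  assumes "is_posheaf F" and "y \<in> sec F u"
  shows "ladj F u u y = y"
  using assms by (intro ladj_eqI) (simp_all add: sheaf_res_id posheaf_sheaf)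

lemma frame_sheaf_lub_exists:
  assumes "frame_sheaf F" and "B \<subseteq> sec F u"
  shows "\<exists>z. is_lub (sec F u) (le F u) B z"
  using assms(1)[unfolded frame_sheaf_def, THEN conjunct2, THEN conjunct1, THEN spec[of _ u],
      unfolded frame_on_def, THEN conjunct2, THEN conjunct1] assms(2) by blast

lemma sup_sh_eq_lub_ladj:
  assumes F: "frame_sheaf F" and T: "\<forall>w. w \<le> u \<longrightarrow> T w \<subseteq> sec F w"
  shows "sup_sh F u T = lub_on (sec F u) (le F u) (\<Union>v\<in>{..u}. ladj F u v ` T v)"
proof -
  let ?L = "\<Union>v\<in>{..u}. ladj F u v ` T v"
  note po = posheaf_partial_order[OF frame_sheaf_posheaf[OF F]]
  have "?L \<subseteq> sec F u" using T frame_sheaf_ladj(1)[OF F] by fastforce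
  then obtain z where z: "is_lub (sec F u) (le F u) ?L z" using frame_sheaf_lub_exists[OF F] by blast
  have ub_iff: "sh_upper_bound F u T z' \<longleftrightarrow> (\<forall>b\<in>?L. le F u b z')" if "z' \<in> sec F u" for z'
    using T frame_sheaf_ladj(2)[OF F _ _ that] unfolding sh_upper_bound_def by fastforce
  have "sup_sh F u T = z"
    using z ub_iff by (intro sup_sh_eqI[OF po]) (auto simp: is_lub_def)
  also have "z = lub_on (sec F u) (le F u) ?L"
    using lub_on_eqI[OF po z] by simp
  finally show ?thesis .
qed

lemma sup_sh_single_stage:
  assumes "frame_sheaf F" and "v \<le> u" and "C \<subseteq> sec F v"
  shows "sup_sh F u (\<lambda>w. if w = v then C else {}) = lub_on (sec F u) (le F u) (ladj F u v ` C)"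
proof -
  have "(\<Union>w\<in>{..u}. ladj F u w ` (if w = v then C else {})) = ladj F u v ` C"
    using \<open>v \<le> u\<close> by (auto split: if_splits)
  with assms show ?thesis by (simp add: sup_sh_eq_lub_ladj)
qed

lemma sup_preserving_sup_sh_image:
  assumes F: "is_posheaf F" and G: "is_posheaf G" and \<alpha>: "sheaf_morphism F G \<alpha>"
    and sup: "sup_preserving F G \<alpha>" and T: "\<forall>w. w \<le> u \<longrightarrow> T w \<subseteq> sec F w"
  shows "sup_sh G u (\<lambda>v. \<alpha> v ` T v) = \<alpha> u (sup_sh F u T)"
proof -
  note sF = posheaf_sheaf[OF F]
  let ?S = "push (\<lambda>w x. x) F u T"
  have T': "\<forall>w. w \<le> u \<longrightarrow> (\<lambda>x. x) ` T w \<subseteq> sec F w" using T by simp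
  have S: "subsheaf F u ?S" by (rule subsheaf_push[OF sF T'])
  have "sup_sh G u (\<lambda>v. \<alpha> v ` T v) = sup_sh G u (\<lambda>v. \<alpha> v ` ?S v)"
    using sup_sh_push[OF sF G \<alpha> T'] by simp
  also have "\<dots> = sup_sh G u (push \<alpha> G u ?S)"
    using sup_sh_push_image[OF G \<alpha>] subsheaf_sec[OF S] by simp
  also have "\<dots> = \<alpha> u (sup_sh F u ?S)"
    using sup S unfolding sup_preserving_def by blast
  also have "sup_sh F u ?S = sup_sh F u T"
    using sup_sh_push[OF sF F sheaf_morphism_id[OF sF] T'] by simp
  finally show ?thesis .
qed

lemma sup_preserving_lub_ladj:
  assumes F: "frame_sheaf F" and G: "frame_sheaf G" and \<alpha>: "sheaf_morphism F G \<alpha>"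
    and "sup_preserving F G \<alpha>" and vu: "v \<le> u" and C: "C \<subseteq> sec F v"
  shows "\<alpha> u (lub_on (sec F u) (le F u) (ladj F u v ` C)) =
    lub_on (sec G u) (le G u) (ladj G u v ` \<alpha> v ` C)"
proof -
  let ?T = "\<lambda>w. if w = v then C else {}"
  have "(\<lambda>w. \<alpha> w ` ?T w) = (\<lambda>w. if w = v then \<alpha> v ` C else {})" by (auto simp: fun_eq_iff)
  moreover have "\<alpha> v ` C \<subseteq> sec G v" using C sheaf_morphism_sec[OF \<alpha>] by blast
  ultimately show ?thesis
    using sup_preserving_sup_sh_image[OF frame_sheaf_posheaf[OF F] frame_sheaf_posheaf[OF G] \<alpha>
        \<open>sup_preserving F G \<alpha>\<close>, of u ?T] C
    by (simp add: sup_sh_single_stage[OF F vu C] sup_sh_single_stage[OF G vu])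
qed

lemma sup_preserving_lub_on:
  assumes "frame_sheaf F" "frame_sheaf G" "sheaf_morphism F G \<alpha>" "sup_preserving F G \<alpha>"
    and C: "C \<subseteq> sec F u"
  shows "\<alpha> u (lub_on (sec F u) (le F u) C) = lub_on (sec G u) (le G u) (\<alpha> u ` C)"
proof -
  have "ladj F u u ` C = C"
    using ladj_refl[OF frame_sheaf_posheaf[OF assms(1)]] C by (simp add: subset_iff cong: image_cong)
  moreover have "ladj G u u ` \<alpha> u ` C = \<alpha> u ` C"
    using ladj_refl[OF frame_sheaf_posheaf[OF assms(2)]] sheaf_morphism_sec[OF assms(3)] C
    by (simp add: subset_iff image_image cong: image_cong)
  ultimately show ?thesis
    using sup_preserving_lub_ladj[OF assms(1-4) order_refl C] by simp
qed

lemma sup_preserving_ladj: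
  assumes F: "frame_sheaf F" and G: "frame_sheaf G" and \<alpha>: "sheaf_morphism F G \<alpha>"
    and "sup_preserving F G \<alpha>" and vu: "v \<le> u" and y: "y \<in> sec F v"
  shows "\<alpha> u (ladj F u v y) = ladj G u v (\<alpha> v y)"
  using sup_preserving_lub_ladj[OF assms(1-5), of "{y}"] y
    lub_on_singleton[OF posheaf_partial_order[OF frame_sheaf_posheaf[OF F]] frame_sheaf_ladj(1)[OF F vu y]]
    lub_on_singleton[OF posheaf_partial_order[OF frame_sheaf_posheaf[OF G]]
      frame_sheaf_ladj(1)[OF G vu sheaf_morphism_sec[OF \<alpha> y]]]
  by simp

lemma sup_preserving_if_lub_on_ladj:
  assumes F: "frame_sheaf F" and G: "frame_sheaf G" and \<alpha>: "sheaf_morphism F G \<alpha>"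
    and lub: "\<And>u C. C \<subseteq> sec F u \<Longrightarrow>
      \<alpha> u (lub_on (sec F u) (le F u) C) = lub_on (sec G u) (le G u) (\<alpha> u ` C)"
    and ladj: "\<And>u v y. v \<le> u \<Longrightarrow> y \<in> sec F v \<Longrightarrow> \<alpha> u (ladj F u v y) = ladj G u v (\<alpha> v y)"
  shows "sup_preserving F G \<alpha>"
  unfolding sup_preserving_def
proof (intro allI impI)
  fix u S assume S: "subsheaf F u S"
  then have S_sec: "\<forall>w. w \<le> u \<longrightarrow> S w \<subseteq> sec F w" using subsheaf_sec by blast
  let ?L = "\<Union>v\<in>{..u}. ladj F u v ` S v"
  have "?L \<subseteq> sec F u" using S_sec frame_sheaf_ladj(1)[OF F] by fastforce
  have image_L: "(\<Union>v\<in>{..u}. ladj G u v ` \<alpha> v ` S v) = \<alpha> u ` ?L"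
    unfolding image_UN image_image using S_sec by (intro SUP_cong refl image_cong) (simp add: ladj subset_iff)
  have "sup_sh G u (push \<alpha> G u S) = sup_sh G u (\<lambda>v. \<alpha> v ` S v)"
    by (rule sup_sh_push_image[OF frame_sheaf_posheaf[OF G] \<alpha> S_sec])
  also have "\<dots> = lub_on (sec G u) (le G u) (\<Union>v\<in>{..u}. ladj G u v ` \<alpha> v ` S v)"
    using S_sec sheaf_morphism_sec[OF \<alpha>] by (intro sup_sh_eq_lub_ladj[OF G]) blast
  also have "\<dots> = lub_on (sec G u) (le G u) (\<alpha> u ` ?L)" by (simp only: image_L)
  also have "\<dots> = \<alpha> u (sup_sh F u S)"
    using lub[OF \<open>?L \<subseteq> sec F u\<close>] sup_sh_eq_lub_ladj[OF F S_sec] by simp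
  finally show "sup_sh G u (push \<alpha> G u S) = \<alpha> u (sup_sh F u S)" .
qed

theorem lemma3p3:
  fixes F :: "('o::complete_lattice, 'a) posheaf"
    and G :: "('o, 'b) posheaf"
    and \<alpha> :: "'o \<Rightarrow> 'a \<Rightarrow> 'b"
  assumes "frame_type TYPE('o)"
    and F: "frame_sheaf F" and G: "frame_sheaf G"
    and \<alpha>: "sheaf_morphism F G \<alpha>" and "order_preserving F G \<alpha>"
  shows "frame_morphism F G \<alpha> \<longleftrightarrow>
    ((\<forall>u. frame_hom (sec F u) (le F u) (sec G u) (le G u) (\<alpha> u)) \<and>
     (\<forall>u v. v \<le> u \<longrightarrow> (\<forall>y\<in>sec F v. \<alpha> u (ladj F u v y) = ladj G u v (\<alpha> v y))))"
proof
  assume "frame_morphism F G \<alpha>"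
  then have sup: "sup_preserving F G \<alpha>" and meets: "preserves_finite_meets F G \<alpha>"
    unfolding frame_morphism_def by blast+
  show "(\<forall>u. frame_hom (sec F u) (le F u) (sec G u) (le G u) (\<alpha> u)) \<and>
     (\<forall>u v. v \<le> u \<longrightarrow> (\<forall>y\<in>sec F v. \<alpha> u (ladj F u v y) = ladj G u v (\<alpha> v y)))"
    using meets sheaf_morphism_sec[OF \<alpha>] sup_preserving_lub_on[OF F G \<alpha> sup]
      sup_preserving_ladj[OF F G \<alpha> sup]
    unfolding frame_hom_def preserves_finite_meets_def by blast
next
  assume "(\<forall>u. frame_hom (sec F u) (le F u) (sec G u) (le G u) (\<alpha> u)) \<and>
     (\<forall>u v. v \<le> u \<longrightarrow> (\<forall>y\<in>sec F v. \<alpha> u (ladj F u v y) = ladj G u v (\<alpha> v y)))"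
  then have "sup_preserving F G \<alpha>" and "preserves_finite_meets F G \<alpha>"
    unfolding frame_hom_def preserves_finite_meets_def
    by (auto intro!: sup_preserving_if_lub_on_ladj[OF F G \<alpha>])
  then show "frame_morphism F G \<alpha>" unfolding frame_morphism_def by blast
qed

end
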